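(* For every $\delta^0$-maderian digraph $F$, $\mathrm{mad}_{\vec{\chi}}(F)\leq \mathrm{mad}_{\delta^0}(F)+1$.
   Context: $\vec{\chi}(D)$ is the dichromatic number (least $k$ such that $V(D)$ partitions into $k$ sets inducing acyclic subdigraphs); $\delta^0(D)=\min\{\delta^+(D),\delta^-(D)\}$ (minimum of minimum out- and in-degree). A subdivision of $F$ is obtained by replacing each arc $(x,y)$ by a directed $(x,y)$-path, internally disjoint with new internal vertices. For a parameter $\gamma$, $F$ is $\gamma$-maderian if some integer $c$ exists such that every digraph $D$ with $\gamma(D)\ge c$ contains a subdivision of $F$ as a subdigraph; $\mathrm{mad}_\gamma(F)$ is the least such $c$. *)

theory Defs
  imports Main
begin

text \<open>A (finite, loopless, simple) digraph is a pair (V, A) of a finite vertex set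
and an arc set A \<subseteq> V \<times> V without loops. Digons (both (u,v) and (v,u)) are allowed.\<close>

type_synonym 'a dg = "'a set \<times> ('a \<times> 'a) set"

definition verts :: "'a dg \<Rightarrow> 'a set" where "verts D = fst D"
definition arcs :: "'a dg \<Rightarrow> ('a \<times> 'a) set" where "arcs D = snd D"

definition wf_digraph :: "'a dg \<Rightarrow> bool" where
  "wf_digraph D \<longleftrightarrow> finite (verts D) \<and> arcs D \<subseteq> verts D \<times> verts D
      \<and> (\<forall>v. (v, v) \<notin> arcs D)"

definition min_outdeg :: "'a dg \<Rightarrow> nat" where
  "min_outdeg D = (if verts D = {} then 0
     else Min ((\<lambda>v. card {w. (v, w) \<in> arcs D}) ` verts D))"

definition min_indeg :: "'a dg \<Rightarrow> nat" where
  "min_indeg D = (if verts D = {} then 0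
     else Min ((\<lambda>v. card {u. (u, v) \<in> arcs D}) ` verts D))"

definition delta0 :: "'a dg \<Rightarrow> nat" where
  "delta0 D = min (min_outdeg D) (min_indeg D)"

definition dichromatic :: "'a dg \<Rightarrow> nat" where
  "dichromatic D = (LEAST k. \<exists>c :: 'a \<Rightarrow> nat.
      (\<forall>v\<in>verts D. c v < k) \<and>
      (\<forall>i. acyclic {(u, v) \<in> arcs D. u \<in> verts D \<and> v \<in> verts D \<and> c u = i \<and> c v = i}))"

definition is_dpath :: "'a dg \<Rightarrow> 'a list \<Rightarrow> bool" where
  "is_dpath D p \<longleftrightarrow> p \<noteq> [] \<and> distinct p \<and> set p \<subseteq> verts D
      \<and> (\<forall>i. Suc i < length p \<longrightarrow> (p ! i, p ! Suc i) \<in> arcs D)"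

definition inner :: "'a list \<Rightarrow> 'a list" where
  "inner p = butlast (tl p)"

definition contains_subdivision :: "'a dg \<Rightarrow> 'b dg \<Rightarrow> bool" where
  "contains_subdivision F D \<longleftrightarrow> (\<exists>(f :: 'a \<Rightarrow> 'b) (P :: 'a \<times> 'a \<Rightarrow> 'b list).
      inj_on f (verts F) \<and> f ` verts F \<subseteq> verts D \<and>
      (\<forall>a\<in>arcs F. is_dpath D (P a) \<and> hd (P a) = f (fst a) \<and> last (P a) = f (snd a)
                   \<and> set (inner (P a)) \<inter> f ` verts F = {}) \<and>
      (\<forall>a\<in>arcs F. \<forall>b\<in>arcs F. a \<noteq> b \<longrightarrow> set (inner (P a)) \<inter> set (P b) = {}))"

text \<open>gamma-maderian and mad. Host digraphs range over all finite digraphs, represented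
with vertices in nat (every finite digraph is isomorphic to one of these).\<close>
definition maderian :: "(nat dg \<Rightarrow> nat) \<Rightarrow> 'a dg \<Rightarrow> bool" where
  "maderian \<gamma> F \<longleftrightarrow> (\<exists>c. \<forall>D :: nat dg. wf_digraph D \<and> \<gamma> D \<ge> c \<longrightarrow> contains_subdivision F D)"

definition mad :: "(nat dg \<Rightarrow> nat) \<Rightarrow> 'a dg \<Rightarrow> nat" where
  "mad \<gamma> F = (LEAST c. \<forall>D :: nat dg. wf_digraph D \<and> \<gamma> D \<ge> c \<longrightarrow> contains_subdivision F D)"

end

theory Submission
  imports Defs
begin

text \<open>If the dichromatic number of \<open>D\<close> exceeds \<open>k\<close>, a vertex set of minimum size
among those inducing a subdigraph that is not acyclically \<open>k\<close>-colourable induces a vertex-critical subdigraph. In it every vertex \<open>v\<close> has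
out- and in-degree at least \<open>k\<close>: otherwise a \<open>k\<close>-colouring of the subdigraph without \<open>v\<close> misses
some colour on the out-neighbours (resp. in-neighbours) of \<open>v\<close>, and giving \<open>v\<close> that colour keeps
all colour classes acyclic, because \<open>v\<close> becomes a sink (resp. source) of its class. So the
critical subdigraph has \<open>\<delta>\<^sup>0 \<ge> k\<close> and, for \<open>k = mad delta0 F\<close>, contains a subdivision of \<open>F\<close>.\<close>

definition induced :: "'a dg \<Rightarrow> 'a set \<Rightarrow> 'a dg" where
  "induced D S = (S, {(u, v) \<in> arcs D. u \<in> S \<and> v \<in> S})"

definition converse_dg :: "'a dg \<Rightarrow> 'a dg" where
  "converse_dg D = (verts D, (arcs D)\<inverse>)"

definition colour_class :: "'a dg \<Rightarrow> ('a \<Rightarrow> nat) \<Rightarrow> nat \<Rightarrow> ('a \<times> 'a) set" where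
  "colour_class D c i = {(u, v) \<in> arcs D. u \<in> verts D \<and> v \<in> verts D \<and> c u = i \<and> c v = i}"

definition dicolourable :: "'a dg \<Rightarrow> nat \<Rightarrow> bool" where
  "dicolourable D k \<longleftrightarrow> (\<exists>c. (\<forall>v\<in>verts D. c v < k) \<and> (\<forall>i. acyclic (colour_class D c i)))"

definition vertex_critical :: "'a dg \<Rightarrow> nat \<Rightarrow> bool" where
  "vertex_critical D k \<longleftrightarrow> \<not> dicolourable D k
      \<and> (\<forall>v\<in>verts D. dicolourable (induced D (verts D - {v})) k)"

lemma verts_induced [simp]: "verts (induced D S) = S"
  and arcs_induced [simp]: "arcs (induced D S) = {(u, v) \<in> arcs D. u \<in> S \<and> v \<in> S}"
  by (simp_all add: induced_def verts_def arcs_def)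

lemma verts_converse_dg [simp]: "verts (converse_dg D) = verts D"
  and arcs_converse_dg [simp]: "arcs (converse_dg D) = (arcs D)\<inverse>"
  by (simp_all add: converse_dg_def verts_def arcs_def)

lemma induced_induced [simp]: "T \<subseteq> S \<Longrightarrow> induced (induced D S) T = induced D T"
  by (auto simp: induced_def arcs_def)

lemma induced_verts: "wf_digraph D \<Longrightarrow> induced D (verts D) = D"
  by (cases D) (auto simp: wf_digraph_def induced_def verts_def arcs_def)

lemma induced_converse_dg: "induced (converse_dg D) S = converse_dg (induced D S)"
  by (auto simp: induced_def converse_dg_def verts_def arcs_def)

lemma wf_digraph_induced: "wf_digraph D \<Longrightarrow> S \<subseteq> verts D \<Longrightarrow> wf_digraph (induced D S)"
  unfolding wf_digraph_def by (auto intro: finite_subset)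

lemma wf_digraph_converse_dg: "wf_digraph D \<Longrightarrow> wf_digraph (converse_dg D)"
  unfolding wf_digraph_def by auto

lemma dichromatic_eq_Least_dicolourable: "dichromatic D = (LEAST k. dicolourable D k)"
  unfolding dichromatic_def dicolourable_def colour_class_def ..

lemma not_dicolourable_if_dichromatic_gt:
  assumes "k < dichromatic D" shows "\<not> dicolourable D k"
  using assms not_less_Least by (auto simp: dichromatic_eq_Least_dicolourable)

lemma colour_class_converse_dg: "colour_class (converse_dg D) c i = (colour_class D c i)\<inverse>"
  by (auto simp: colour_class_def)

lemma dicolourable_converse_dg [simp]: "dicolourable (converse_dg D) k = dicolourable D k"
  by (simp add: dicolourable_def colour_class_converse_dg)

lemma vertex_critical_converse_dg: "vertex_critical D k \<Longrightarrow> vertex_critical (converse_dg D) k"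
  by (simp add: vertex_critical_def induced_converse_dg)

lemma acyclic_if_sink:
  assumes acyclic_R0: "acyclic R0"
    and sink: "\<And>w. (v, w) \<notin> R"
    and off_v: "\<And>x y. (x, y) \<in> R \<Longrightarrow> x \<noteq> v \<Longrightarrow> y \<noteq> v \<Longrightarrow> (x, y) \<in> R0"
  shows "acyclic R"
proof -
  have path_avoiding_v: "(x, y) \<in> R0\<^sup>+" if "(x, y) \<in> R\<^sup>+" "y \<noteq> v" for x y
    using that
  proof (induction rule: trancl_induct)
    case (base y)
    then show ?case using sink off_v by (metis r_into_trancl')
  next
    case (step y z)
    then show ?case using sink off_v by (metis trancl.trancl_into_trancl)
  qed
  show ?thesis unfolding acyclic_def
  proof
    fix x
    show "(x, x) \<notin> R\<^sup>+"
    proof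
      assume cycle: "(x, x) \<in> R\<^sup>+"
      then obtain y where "(x, y) \<in> R" by (meson tranclD)
      with sink have "x \<noteq> v" by auto
      with path_avoiding_v[OF cycle] acyclic_R0 show False by (auto simp: acyclic_def)
    qed
  qed
qed

lemma vertex_critical_out_degree:
  assumes wf: "wf_digraph D" and critical: "vertex_critical D k" and v: "v \<in> verts D"
  shows "k \<le> card {w. (v, w) \<in> arcs D}"
proof (rule ccontr)
  let ?N = "{w. (v, w) \<in> arcs D}"
  assume "\<not> k \<le> card ?N"
  moreover have finite_N: "finite ?N"
    using wf by (auto simp: wf_digraph_def intro: finite_subset)
  obtain c where c_range: "\<forall>u\<in>verts D - {v}. c u < k"
    and c_acyclic: "\<forall>i. acyclic (colour_class (induced D (verts D - {v})) c i)"
    using critical v by (auto simp: vertex_critical_def dicolourable_def)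
  ultimately have "card (c ` ?N) < card {..<k}"
    using card_image_le[OF finite_N, of c] by simp
  then have "\<not> {..<k} \<subseteq> c ` ?N"
    using card_mono[OF finite_imageI[OF finite_N]] by fastforce
  then obtain j where j: "j < k" "j \<notin> c ` ?N" by auto
  have "dicolourable D k"
    unfolding dicolourable_def
  proof (intro exI[of _ "c(v := j)"] conjI allI ballI)
    fix u assume "u \<in> verts D"
    then show "(c(v := j)) u < k" using c_range j by auto
  next
    fix i
    have no_loop: "(v, v) \<notin> arcs D" using wf by (simp add: wf_digraph_def)
    show "acyclic (colour_class D (c(v := j)) i)"
    proof (rule acyclic_if_sink[OF c_acyclic[rule_format, of i], of v])
      fix w
      show "(v, w) \<notin> colour_class D (c(v := j)) i"
        using no_loop j by (cases "w = v") (auto simp: colour_class_def)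
    qed (auto simp: colour_class_def)
  qed
  with critical show False by (simp add: vertex_critical_def)
qed

lemma vertex_critical_delta0:
  assumes wf: "wf_digraph D" and critical: "vertex_critical D k"
  shows "k \<le> delta0 D"
proof -
  have nonempty: "verts D \<noteq> {}"
    using critical
    by (auto simp: vertex_critical_def dicolourable_def colour_class_def acyclic_def)
  have finite: "finite (verts D)" using wf by (simp add: wf_digraph_def)
  have out: "k \<le> card {w. (v, w) \<in> arcs D}" if "v \<in> verts D" for v
    using vertex_critical_out_degree[OF wf critical that] .
  have "k \<le> card {w. (v, w) \<in> arcs (converse_dg D)}" if "v \<in> verts D" for v
    using vertex_critical_out_degree[OF wf_digraph_converse_dg[OF wf]
        vertex_critical_converse_dg[OF critical]] that by simp
  then have "k \<le> card {u. (u, v) \<in> arcs D}" if "v \<in> verts D" for v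
    using that by simp
  with out nonempty finite show ?thesis
    by (simp add: delta0_def min_outdeg_def min_indeg_def)
qed

lemma ex_vertex_critical_induced:
  assumes wf: "wf_digraph D" and not_colourable: "\<not> dicolourable D k"
  shows "\<exists>S \<subseteq> verts D. vertex_critical (induced D S) k"
proof -
  let ?bad = "\<lambda>S. S \<subseteq> verts D \<and> \<not> dicolourable (induced D S) k"
  have "?bad (verts D)" using not_colourable induced_verts[OF wf] by simp
  then obtain S where bad_S: "?bad S" and minimal: "\<And>T. ?bad T \<Longrightarrow> card S \<le> card T"
    using ex_has_least_nat[of ?bad "verts D" card] by auto
  have "finite S" using wf bad_S by (auto simp: wf_digraph_def intro: finite_subset)
  then have "dicolourable (induced D (S - {v})) k" if "v \<in> S" for v
    using minimal[of "S - {v}"] bad_S that card_Diff1_less by fastforce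
  with bad_S show ?thesis by (auto simp: vertex_critical_def)
qed

lemma contains_subdivision_induced:
  assumes "contains_subdivision F (induced D S)" "S \<subseteq> verts D"
  shows "contains_subdivision F D"
proof -
  have "is_dpath D p" if "is_dpath (induced D S) p" for p
    using that assms(2) by (auto simp: is_dpath_def)
  with assms show ?thesis
    unfolding contains_subdivision_def by (metis verts_induced subset_trans)
qed

lemma subdivision_if_dichromatic_gt:
  fixes D :: "'b dg"
  assumes delta0_large: "\<And>D :: 'b dg. wf_digraph D \<Longrightarrow> k \<le> delta0 D \<Longrightarrow> contains_subdivision F D"
    and wf: "wf_digraph D" and "k < dichromatic D"
  shows "contains_subdivision F D"
proof -
  obtain S where S: "S \<subseteq> verts D" and critical: "vertex_critical (induced D S) k"
    using ex_vertex_critical_induced[OF wf not_dicolourable_if_dichromatic_gt] assms(3) by blast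
  have wf_S: "wf_digraph (induced D S)" using wf_digraph_induced[OF wf S] .
  with vertex_critical_delta0[OF wf_S critical] delta0_large
  have "contains_subdivision F (induced D S)" by blast
  then show ?thesis using S by (rule contains_subdivision_induced)
qed

theorem corollary34:
  fixes F :: "'a dg"
  assumes "wf_digraph F"
    and "maderian delta0 F"
  shows "maderian dichromatic F \<and> mad dichromatic F \<le> mad delta0 F + 1"
proof -
  let ?m = "mad delta0 F"
  have delta0_large: "\<forall>D :: nat dg. wf_digraph D \<and> ?m \<le> delta0 D \<longrightarrow> contains_subdivision F D"
    using assms(2) unfolding maderian_def mad_def by (rule LeastI_ex)
  have dichromatic_large:
    "\<forall>D :: nat dg. wf_digraph D \<and> ?m + 1 \<le> dichromatic D \<longrightarrow> contains_subdivision F D"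
  proof (intro allI impI, elim conjE)
    fix D :: "nat dg"
    assume "wf_digraph D" "?m + 1 \<le> dichromatic D"
    then show "contains_subdivision F D"
      using subdivision_if_dichromatic_gt[of ?m F D] delta0_large by simp
  qed
  then have "maderian dichromatic F" unfolding maderian_def by blast
  moreover have "mad dichromatic F \<le> ?m + 1"
    unfolding mad_def[of dichromatic] using dichromatic_large by (rule Least_le)
  ultimately show ?thesis ..
qed

end
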